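(* Let $E$ be a finite-dimensional vector space of dimension $d\ge 2$ over a local field and let $\nu$ be a probability distribution on $\mathrm{End}(E)$. The set $\underline{\ker}(\nu)$ is a countable union of subspaces of $E$ each of dimension at most $\dim(E)-\underline{\mathrm{rank}}(\nu)$.
   Context: $\nu^{*n}$ is the law of a product of $n$ i.i.d. $\nu$-distributed endomorphisms. $\underline{\mathrm{rank}}(\nu)$ is the largest integer $r$ with $\nu^{*n}\{\gamma:\mathrm{rank}(\gamma)<r\}=0$ for all $n\ge0$. $\underline{\ker}(\nu)=\{v\in E:\exists n\ge0,\ \nu^{*n}\{h:hv=0\}>0\}$. *)

theory Defs
  imports "HOL-Probability.Probability"
begin

text \<open>A local field: a Hausdorff topological field which is locally compact and
  non-discrete. (Second countability, which every local field enjoys, is imposed as a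
  type class constraint in the statement.)\<close>
definition local_field :: "'k::{field,topological_space} itself \<Rightarrow> bool" where
  "local_field _ \<longleftrightarrow>
     continuous_on UNIV (\<lambda>p::'k \<times> 'k. fst p + snd p) \<and>
     continuous_on UNIV (\<lambda>p::'k \<times> 'k. fst p * snd p) \<and>
     continuous_on UNIV (\<lambda>x::'k. - x) \<and>
     continuous_on (- {0}) (\<lambda>x::'k. inverse x) \<and>
     (\<forall>x::'k. \<exists>U C. open U \<and> compact C \<and> x \<in> U \<and> U \<subseteq> C) \<and>
     (\<forall>x::'k. \<not> open {x})"

text \<open>Endomorphisms of E = K^n are n x n matrices acting by matrix-vector product.
  \<open>mat_conv_pow \<nu> n\<close> is the law of a product of n i.i.d. \<open>\<nu>\<close>-distributed matrices
  (the identity for n = 0).\<close>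
primrec mat_conv_pow ::
  "('k::{field,topological_space} ^'n::finite^'n) measure \<Rightarrow> nat \<Rightarrow> ('k^'n^'n) measure" where
  "mat_conv_pow \<nu> 0 = return borel (mat 1)"
| "mat_conv_pow \<nu> (Suc n) = distr (mat_conv_pow \<nu> n \<Otimes>\<^sub>M \<nu>) borel (\<lambda>(g, h). g ** h)"

definition lower_rank :: "('k::{field,topological_space} ^'n::finite^'n) measure \<Rightarrow> nat" where
  "lower_rank \<nu> = (GREATEST r. \<forall>n. emeasure (mat_conv_pow \<nu> n) {\<gamma>. rank \<gamma> < r} = 0)"

definition lower_ker :: "('k::{field,topological_space} ^'n::finite^'n) measure \<Rightarrow> ('k^'n) set" where
  "lower_ker \<nu> = {v. \<exists>n. emeasure (mat_conv_pow \<nu> n) {h. h *v v = 0} > 0}"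

end

theory Submission
  imports Defs
begin

text \<open>Fix n and call a subspace V of E charged if the matrices killing V have positive mass
  under the law of a product of n factors; consider the maximal charged subspaces. Two distinct
  maximal ones V, V' span a strictly larger subspace, so the sets of matrices killing V and V'
  meet in a null set, and in a finite measure such an almost disjoint family of sets of
  positive measure is countable. Enlarging the line through a vector of the lower kernel as
  long as it stays charged reaches a maximal charged subspace. A charged V is killed by some
  matrix of rank at least the lower rank r, so dim V \<le> d - r by rank-nullity; the rank
  condition is Borel because rank g < r iff det (A g B + I - P) = 0 for all A, B, where P is a
  coordinate projection of rank r.\<close>

lemma rank_le_card_gen: "rank (h::'k::field^'n::finite^'m::finite) \<le> CARD('n)"
  unfolding row_rank_def_gen by (rule dim_subset_UNIV_cart_gen)

lemma rows_eqI: "(\<And>i. row i X = row i Y) \<Longrightarrow> X = Y"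
  by (simp add: vec_eq_iff row_def)

lemma row_matrix_mult_left: "row i (A ** X) = (\<Sum>k\<in>UNIV. A$i$k *s row k X)"
  by (simp add: vec_eq_iff matrix_matrix_mult_def row_def sum_component mult.commute)

lemma row_matrix_mult_right:
  "row i ((X::'k::field^'n::finite^'m::finite) ** B) = transpose B *v row i X"
  by (auto simp: vec_eq_iff matrix_matrix_mult_def row_def matrix_vector_mult_def transpose_def
      intro!: sum.cong mult.commute)

lemma rank_mul_le_right_gen: "rank (A ** (X::'k::field^'n::finite^'m::finite)) \<le> rank X"
proof -
  have "rows (A ** X) \<subseteq> vec.span (rows X)"
  proof
    fix r assume "r \<in> rows (A ** X)"
    then obtain i where r: "r = row i (A ** X)" by (auto simp: rows_def)
    show "r \<in> vec.span (rows X)" unfolding r row_matrix_mult_left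
      by (intro vec.span_sum vec.span_scale vec.span_base) (auto simp: rows_def)
  qed
  then show ?thesis unfolding row_rank_def_gen by (rule vec.dim_mono)
qed

lemma rank_mul_le_left_gen: "rank ((X::'k::field^'n::finite^'m::finite) ** B) \<le> rank X"
proof -
  have "rows (X ** B) = (\<lambda>r. transpose B *v r) ` rows X"
    by (auto simp: rows_def row_matrix_mult_right)
  then show ?thesis unfolding row_rank_def_gen
    using vec.dim_image_le[OF matrix_vector_mul_linear_gen[of "transpose B"], of "rows X"] by simp
qed

lemma rank_add_le_gen: "rank ((X::'k::field^'n::finite^'m::finite) + Y) \<le> rank X + rank Y"
proof -
  let ?S = "vec.span (rows X)" and ?T = "vec.span (rows Y)"
  have "rows (X + Y) \<subseteq> {x + y |x y. x \<in> ?S \<and> y \<in> ?T}"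
  proof
    fix r assume "r \<in> rows (X + Y)"
    then obtain i where "r = row i (X + Y)" by (auto simp: rows_def)
    then have "r = row i X + row i Y" by (simp add: vec_eq_iff row_def)
    moreover have "row i X \<in> ?S" "row i Y \<in> ?T"
      by (auto intro!: vec.span_base simp: rows_def)
    ultimately show "r \<in> {x + y |x y. x \<in> ?S \<and> y \<in> ?T}" by blast
  qed
  then have "rank (X + Y) \<le> vec.dim {x + y |x y. x \<in> ?S \<and> y \<in> ?T}"
    unfolding row_rank_def_gen by (rule vec.dim_subset)
  also have "\<dots> \<le> vec.dim ?S + vec.dim ?T"
    using vec.dim_sums_Int[of ?S ?T] by simp
  finally show ?thesis unfolding row_rank_def_gen by simp
qed

lemma card_le_rank_if_det_nz: "det (X::'k::field^'n::finite^'n) \<noteq> 0 \<Longrightarrow> CARD('n) \<le> rank X"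
proof -
  assume "det X \<noteq> 0"
  then have "vec.span (rows X) = UNIV"
    using invertible_det_nz invertible_left_inverse matrix_left_invertible_span_rows_gen by blast
  then show ?thesis
    unfolding row_rank_def_gen by (metis order_refl vec.dim_span vec_dim_card)
qed

definition coord_proj :: "'n::finite set \<Rightarrow> 'k::field^'n^'n" where
  "coord_proj S = (\<chi> i j. if i = j \<and> i \<in> S then 1 else 0)"

lemma row_coord_proj: "row i (coord_proj S) = (if i \<in> S then axis i 1 else 0)"
  by (auto simp: vec_eq_iff row_def coord_proj_def axis_def)

lemma coord_proj_mult_vec: "coord_proj S *v x = (\<chi> i. if i \<in> S then x $ i else 0)"
  by (simp add: vec_eq_iff matrix_vector_mult_def coord_proj_def if_distrib[of "\<lambda>a. a * _"]
      sum.If_cases Int_def)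

lemma coord_proj_idem: "coord_proj S *v (coord_proj S *v x) = coord_proj S *v x"
  by (simp add: coord_proj_mult_vec vec_eq_iff)

lemma coord_proj_axis: "i \<in> S \<Longrightarrow> coord_proj S *v axis i 1 = axis i 1"
  by (simp add: coord_proj_mult_vec vec_eq_iff axis_def)

lemma coord_proj_add_Compl: "coord_proj S + coord_proj (- S) = mat 1"
  by (simp add: vec_eq_iff coord_proj_def mat_def)

lemma rank_coord_proj_le: "rank (coord_proj S :: 'k::field^'n::finite^'n) \<le> card S"
proof -
  have "rows (coord_proj S :: 'k^'n^'n) \<subseteq> vec.span ((\<lambda>i. axis i 1) ` S)"
    by (auto simp: rows_def row_coord_proj intro: vec.span_base vec.span_zero)
  then have "rank (coord_proj S :: 'k^'n^'n) \<le> card ((\<lambda>i. axis i (1::'k)) ` S :: ('k^'n) set)"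
    unfolding row_rank_def_gen by (rule vec.dim_le_card) simp
  also have "\<dots> \<le> card S" by (rule card_image_le) simp
  finally show ?thesis .
qed

lemma obtain_independent_rows:
  fixes h :: "'k::field^'n::finite^'m::finite" and S :: "'i set"
  assumes "finite S" and "card S \<le> rank h"
  obtains \<sigma> where "inj_on (\<lambda>i. row (\<sigma> i) h) S" and "vec.independent ((\<lambda>i. row (\<sigma> i) h) ` S)"
proof -
  obtain B where B: "B \<subseteq> rows h" "vec.independent B" "card B = rank h"
    unfolding row_rank_def_gen by (metis vec.basis_exists)
  obtain C where C: "C \<subseteq> B" "card C = card S" "finite C"
    using assms(2) B(3) by (metis obtain_subset_with_card_n)
  obtain f where f: "bij_betw f S C"
    using finite_same_card_bij[OF assms(1) C(3)] C(2) by auto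
  define \<sigma> where "\<sigma> i = (SOME k. row k h = f i)" for i
  have row_\<sigma>: "row (\<sigma> i) h = f i" if "i \<in> S" for i
  proof -
    have "f i \<in> rows h" using that f C(1) B(1) by (auto dest: bij_betw_apply)
    then show ?thesis unfolding \<sigma>_def rows_def by (auto intro: someI)
  qed
  show thesis
  proof
    show "inj_on (\<lambda>i. row (\<sigma> i) h) S"
      using f row_\<sigma> by (simp add: bij_betw_def inj_on_def)
    have "(\<lambda>i. row (\<sigma> i) h) ` S = C"
      using f row_\<sigma> by (simp add: bij_betw_def)
    then show "vec.independent ((\<lambda>i. row (\<sigma> i) h) ` S)"
      using vec.independent_mono[OF B(2) C(1)] by simp
  qed
qed

lemma row_select_rows_mult:
  "row i ((\<chi> i k. if i \<in> S \<and> k = \<sigma> i then 1 else 0) ** h) = (if i \<in> S then row (\<sigma> i) h else 0)"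
  by (simp add: row_matrix_mult_left if_distrib[of "\<lambda>a. a *s _"] cong: if_cong)

lemma exists_mult_eq_coord_proj:
  fixes h :: "'k::field^'n::finite^'n" and S :: "'n set"
  assumes "card S \<le> rank h"
  obtains A B where "A ** h ** B = coord_proj S"
proof -
  obtain \<sigma> where inj: "inj_on (\<lambda>i. row (\<sigma> i) h) S"
    and indep: "vec.independent ((\<lambda>i. row (\<sigma> i) h) ` S)"
    using obtain_independent_rows[OF finite assms] .
  obtain g where g: "Vector_Spaces.linear (*s) (*s) g"
    and g_rows: "\<forall>i\<in>S. g (row (\<sigma> i) h) = (axis i 1 :: 'k^'n)"
  proof -
    obtain g where "Vector_Spaces.linear (*s) (*s) g"
      and "\<forall>r\<in>(\<lambda>i. row (\<sigma> i) h) ` S. g r = axis (inv_into S (\<lambda>i. row (\<sigma> i) h) r) (1::'k)"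
      using vec.linear_independent_extend[OF indep,
          of "\<lambda>r. axis (inv_into S (\<lambda>i. row (\<sigma> i) h) r) 1"] by blast
    then show thesis by (intro that) (auto simp: inv_into_f_f[OF inj])
  qed
  define A :: "'k^'n^'n" where "A = (\<chi> i k. if i \<in> S \<and> k = \<sigma> i then 1 else 0)"
  have "row i (A ** h ** transpose (matrix g)) = row i (coord_proj S)" for i
  proof -
    have "row i (A ** h ** transpose (matrix g)) = g (row i (A ** h))"
      by (simp add: row_matrix_mult_right matrix_works[OF g])
    also have "\<dots> = (if i \<in> S then axis i 1 else 0)"
      using g_rows vec.linear_0[OF g] by (simp add: A_def row_select_rows_mult)
    finally show ?thesis by (simp add: row_coord_proj)
  qed
  then show thesis by (intro that rows_eqI)
qed

lemma obtain_injective_subspace_of_rank: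
  fixes h :: "'k::field^'n::finite^'n"
  obtains U where "vec.subspace U" and "rank h \<le> vec.dim U"
    and "\<And>u. u \<in> U \<Longrightarrow> h *v u = 0 \<Longrightarrow> u = 0"
proof -
  have "rank h \<le> card (UNIV :: 'n set)" using rank_le_card_gen[of h] by simp
  then obtain S :: "'n set" where S: "card S = rank h"
    by (rule obtain_subset_with_card_n)
  then obtain A B where AB: "A ** h ** B = coord_proj S"
    using exists_mult_eq_coord_proj[of S h] by auto
  define P :: "'k^'n^'n" where "P = coord_proj S"
  have AhBP: "(A ** h) *v ((B ** P) *v x) = P *v x" for x
  proof -
    have "(A ** h) *v ((B ** P) *v x) = (A ** h ** B) *v (P *v x)"
      by (simp add: matrix_vector_mul_assoc matrix_mul_assoc)
    also have "\<dots> = P *v x" by (simp add: AB P_def coord_proj_idem)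
    finally show ?thesis .
  qed
  show thesis
  proof
    show "vec.subspace (range (\<lambda>x. (B ** P) *v x))"
      by (rule vec.subspace_image[OF vec.subspace_UNIV])
  next
    fix u assume u: "u \<in> range (\<lambda>x. (B ** P) *v x)" "h *v u = 0"
    then obtain x where x: "u = (B ** P) *v x" by auto
    have "P *v x = 0"
      using u(2) AhBP[of x] by (simp add: x flip: matrix_vector_mul_assoc)
    then show "u = 0" by (simp add: x flip: matrix_vector_mul_assoc)
  next
    let ?U = "range (\<lambda>x. (B ** P) *v x)" and ?e = "\<lambda>i. axis i (1::'k)"
    have "?e i \<in> (\<lambda>x. (A ** h) *v x) ` ?U" if "i \<in> S" for i
    proof
      show "?e i = (A ** h) *v ((B ** P) *v ?e i)"
        using that by (simp only: AhBP) (simp add: P_def coord_proj_axis)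
    qed simp
    then have "?e ` S \<subseteq> (\<lambda>x. (A ** h) *v x) ` ?U" by blast
    moreover have "vec.independent (?e ` S :: ('k^'n) set)"
      by (rule vec.independent_mono[OF independent_cart_basis]) (auto simp: cart_basis_def)
    moreover have "card (?e ` S :: ('k^'n) set) = rank h"
      using S by (subst card_image) (auto simp: inj_on_def axis_eq_axis)
    ultimately have "rank h \<le> vec.dim ((\<lambda>x. (A ** h) *v x) ` ?U)"
      using vec.independent_card_le_dim by metis
    also have "\<dots> \<le> vec.dim ?U"
      by (rule vec.dim_image_le[OF matrix_vector_mul_linear_gen])
    finally show "rank h \<le> vec.dim ?U" .
  qed
qed

lemma dim_add_rank_le_if_annihilates:
  fixes h :: "'k::field^'n::finite^'n"
  assumes W: "vec.subspace W" and hW: "\<And>w. w \<in> W \<Longrightarrow> h *v w = 0"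
  shows "vec.dim W + rank h \<le> CARD('n)"
proof -
  obtain U where U: "vec.subspace U" "rank h \<le> vec.dim U"
    and inj: "\<And>u. u \<in> U \<Longrightarrow> h *v u = 0 \<Longrightarrow> u = 0"
    using obtain_injective_subspace_of_rank[of h] by blast
  have "vec.dim (W \<inter> U) = 0"
    using hW inj by (auto simp: vec.dim_eq_0)
  moreover have "vec.dim {x + y |x y. x \<in> W \<and> y \<in> U} \<le> CARD('n)"
    by (rule dim_subset_UNIV_cart_gen)
  ultimately show ?thesis
    using vec.dim_sums_Int[OF W U(1)] U(2) by linarith
qed

lemma rank_less_iff_det_eq_0:
  fixes g :: "'k::field^'n::finite^'n" and S :: "'n set"
  shows "rank g < card S \<longleftrightarrow> (\<forall>A B. det (A ** g ** B + coord_proj (- S)) = 0)"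
proof
  assume less: "rank g < card S"
  show "\<forall>A B. det (A ** g ** B + coord_proj (- S)) = 0"
  proof (intro allI, rule ccontr)
    fix A B :: "'k^'n^'n"
    assume "det (A ** g ** B + coord_proj (- S)) \<noteq> 0"
    then have "CARD('n) \<le> rank (A ** g ** B + coord_proj (- S))"
      by (rule card_le_rank_if_det_nz)
    also have "\<dots> \<le> rank (A ** g ** B) + rank (coord_proj (- S) :: 'k^'n^'n)"
      by (rule rank_add_le_gen)
    also have "rank (A ** g ** B) \<le> rank g"
      using rank_mul_le_left_gen[of "A ** g" B] rank_mul_le_right_gen[of A g] by linarith
    also have "rank (coord_proj (- S) :: 'k^'n^'n) \<le> CARD('n) - card S"
      using rank_coord_proj_le[of "- S"] by (simp add: Compl_eq_Diff_UNIV card_Diff_subset)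
    finally show False using less card_mono[of UNIV S] by simp
  qed
next
  assume "\<forall>A B. det (A ** g ** B + coord_proj (- S)) = 0"
  moreover have "\<exists>A B. det (A ** g ** B + coord_proj (- S)) = 1" if le: "card S \<le> rank g"
  proof -
    obtain A B where "A ** g ** B = coord_proj S"
      using exists_mult_eq_coord_proj[OF le] .
    then have "det (A ** g ** B + coord_proj (- S)) = 1"
      by (simp add: coord_proj_add_Compl det_I)
    then show ?thesis by blast
  qed
  ultimately show "rank g < card S" by force
qed

definition annihilator :: "('k::field^'n::finite) set \<Rightarrow> ('k^'n^'m::finite) set" where
  "annihilator V = {h. \<forall>v\<in>V. h *v v = 0}"

locale continuous_field_ops =
  fixes field_type :: "'k::{field,t2_space} itself"
  assumes continuous_on_plus: "continuous_on UNIV (\<lambda>p::'k \<times> 'k. fst p + snd p)"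
    and continuous_on_times: "continuous_on UNIV (\<lambda>p::'k \<times> 'k. fst p * snd p)"
begin

lemma continuous_on_add_field:
  fixes f g :: "'x::topological_space \<Rightarrow> 'k"
  assumes "continuous_on UNIV f" "continuous_on UNIV g"
  shows "continuous_on UNIV (\<lambda>x. f x + g x)"
  using continuous_on_compose2[OF continuous_on_plus continuous_on_Pair[OF assms]] by simp

lemma continuous_on_mult_field:
  fixes f g :: "'x::topological_space \<Rightarrow> 'k"
  assumes "continuous_on UNIV f" "continuous_on UNIV g"
  shows "continuous_on UNIV (\<lambda>x. f x * g x)"
  using continuous_on_compose2[OF continuous_on_times continuous_on_Pair[OF assms]] by simp

lemma continuous_on_sum_field:
  fixes f :: "'i \<Rightarrow> 'x::topological_space \<Rightarrow> 'k"
  assumes "finite I" "\<And>i. i \<in> I \<Longrightarrow> continuous_on UNIV (f i)"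
  shows "continuous_on UNIV (\<lambda>x. \<Sum>i\<in>I. f i x)"
  using assms by (induction I rule: finite_induct) (auto intro!: continuous_on_add_field)

lemma continuous_on_prod_field:
  fixes f :: "'i \<Rightarrow> 'x::topological_space \<Rightarrow> 'k"
  assumes "finite I" "\<And>i. i \<in> I \<Longrightarrow> continuous_on UNIV (f i)"
  shows "continuous_on UNIV (\<lambda>x. \<Prod>i\<in>I. f i x)"
  using assms by (induction I rule: finite_induct) (auto intro!: continuous_on_mult_field)

lemma continuous_on_matrix_entry: "continuous_on UNIV (\<lambda>g::'k^'n::finite^'m::finite. g $ i $ j)"
  by (intro continuous_on_component continuous_on_id)

lemma continuous_on_det_field:
  fixes F :: "'x::topological_space \<Rightarrow> 'k^'n::finite^'n"
  assumes "\<And>i j. continuous_on UNIV (\<lambda>x. F x $ i $ j)"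
  shows "continuous_on UNIV (\<lambda>x. det (F x))"
  unfolding det_def
  by (intro continuous_on_sum_field continuous_on_mult_field continuous_on_prod_field
      continuous_on_const assms) auto

lemma closed_det_eq_0: "closed {g::'k^'n::finite^'n. det (A ** g ** B + N) = 0}"
proof -
  have "continuous_on UNIV (\<lambda>g::'k^'n^'n. det (A ** g ** B + N))"
    by (rule continuous_on_det_field)
      (auto simp: matrix_matrix_mult_def intro!: continuous_on_add_field continuous_on_sum_field
        continuous_on_mult_field continuous_on_const continuous_on_matrix_entry)
  then show ?thesis by (intro closed_Collect_eq continuous_on_const)
qed

lemma closed_rank_less: "closed {g::'k^'n::finite^'n. rank g < r}"
proof (cases "r \<le> CARD('n)")
  case True
  then obtain S :: "'n set" where "card S = r"
    by (metis obtain_subset_with_card_n card_UNIV)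
  then have "{g::'k^'n^'n. rank g < r} = (\<Inter>(A, B). {g. det (A ** g ** B + coord_proj (- S)) = 0})"
    by (auto simp: rank_less_iff_det_eq_0)
  then show ?thesis by (auto intro!: closed_INT closed_det_eq_0)
next
  case False
  then have "{g::'k^'n^'n. rank g < r} = UNIV"
    using rank_le_card_gen[where 'k='k and 'n='n and 'm='n] by (auto simp: not_le intro: le_less_trans)
  then show ?thesis by simp
qed

lemma closed_annihilator: "closed (annihilator V :: ('k^'n::finite^'m::finite) set)"
proof -
  have "annihilator V = (\<Inter>v\<in>V. \<Inter>i. {h::'k^'n^'m. (\<Sum>j\<in>UNIV. h $ i $ j * v $ j) = 0})"
    by (auto simp: annihilator_def vec_eq_iff matrix_vector_mult_def)
  moreover have "closed {h::'k^'n^'m. (\<Sum>j\<in>UNIV. h $ i $ j * v $ j) = 0}" for i v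
    by (intro closed_Collect_eq continuous_on_const continuous_on_sum_field continuous_on_mult_field
        continuous_on_matrix_entry) auto
  ultimately show ?thesis by (simp add: closed_INT)
qed

end

lemma continuous_field_ops_if_local_field:
  "local_field TYPE('k::{field,t2_space}) \<Longrightarrow> continuous_field_ops TYPE('k)"
  unfolding local_field_def continuous_field_ops_def by blast

lemma emeasure_distr_le_space: "emeasure (distr M N f) A \<le> emeasure M (space M)"
proof -
  have "emeasure (distr M N f) A \<le> emeasure M (f -` A \<inter> space M)"
    unfolding distr_def by (simp add: emeasure_measure_of_conv)
  also have "\<dots> \<le> emeasure M (space M)" by (rule emeasure_space)
  finally show ?thesis .
qed

lemma sets_mat_conv_pow [simp]: "sets (mat_conv_pow \<nu> n) = sets borel"
  by (cases n) simp_all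

text \<open>The bound above holds for non-measurable f too.\<close>

lemma finite_measure_mat_conv_pow:
  assumes "prob_space \<nu>"
  shows "finite_measure (mat_conv_pow \<nu> n)"
proof -
  interpret \<nu>: prob_space \<nu> by fact
  have "emeasure (mat_conv_pow \<nu> n) (space (mat_conv_pow \<nu> n)) \<le> 1"
  proof (induction n)
    case 0
    then show ?case by (simp add: emeasure_return)
  next
    case (Suc n)
    let ?M = "mat_conv_pow \<nu> n"
    have "emeasure (mat_conv_pow \<nu> (Suc n)) (space (mat_conv_pow \<nu> (Suc n)))
        \<le> emeasure (?M \<Otimes>\<^sub>M \<nu>) (space (?M \<Otimes>\<^sub>M \<nu>))"
      unfolding mat_conv_pow.simps by (rule emeasure_distr_le_space)
    also have "\<dots> = emeasure ?M (space ?M) * emeasure \<nu> (space \<nu>)"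
      unfolding space_pair_measure by (intro \<nu>.emeasure_pair_measure_Times sets.top)
    also have "\<dots> \<le> 1"
      using Suc by (simp add: \<nu>.emeasure_space_1)
    finally show ?case .
  qed
  then show ?thesis by (intro finite_measureI) (auto simp: top_unique)
qed

lemma lower_rank_null:
  fixes \<nu> :: "('k::{field,topological_space}^'n::finite^'n) measure"
  shows "emeasure (mat_conv_pow \<nu> n) {g. rank g < lower_rank \<nu>} = 0"
proof -
  define Q where "Q r \<longleftrightarrow> (\<forall>n. emeasure (mat_conv_pow \<nu> n) {g. rank g < r} = 0)" for r
  have "Q r \<Longrightarrow> r \<le> CARD('n)" for r
  proof (rule ccontr)
    assume "Q r" "\<not> r \<le> CARD('n)"
    then have "{g::'k^'n^'n. rank g < r} = UNIV"
      using rank_le_card_gen[where 'k='k and 'n='n and 'm='n] by (auto simp: not_le intro: le_less_trans)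
    then have "emeasure (mat_conv_pow \<nu> 0) {g::'k^'n^'n. rank g < r} = 1"
      by (simp add: emeasure_return)
    moreover have "emeasure (mat_conv_pow \<nu> 0) {g::'k^'n^'n. rank g < r} = 0"
      using \<open>Q r\<close> unfolding Q_def by blast
    ultimately show False by simp
  qed
  then have "Q (Greatest Q)"
    by (intro GreatestI_nat[of Q 0]) (auto simp: Q_def)
  then show ?thesis unfolding Q_def[abs_def] lower_rank_def by blast
qed

lemma (in finite_measure) card_almost_disjoint_le:
  fixes \<epsilon> :: real
  assumes "finite G" and sets: "\<And>x. x \<in> G \<Longrightarrow> X x \<in> sets M"
    and large: "\<And>x. x \<in> G \<Longrightarrow> \<epsilon> \<le> measure M (X x)"
    and null: "\<And>x y. x \<in> G \<Longrightarrow> y \<in> G \<Longrightarrow> x \<noteq> y \<Longrightarrow> emeasure M (X x \<inter> X y) = 0"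
  shows "card G * \<epsilon> \<le> measure M (space M)"
proof -
  have "card G * \<epsilon> \<le> (\<Sum>x\<in>G. measure M (X x))"
    using large by (intro sum_bounded_below) auto
  also have "\<dots> = measure M (\<Union>x\<in>G. X x)"
  proof (rule measure_UNION_AE[symmetric])
    show "X x \<in> fmeasurable M" if "x \<in> G" for x
      using that sets by (simp add: fmeasurable_eq_sets)
    have "AE z in M. z \<notin> X x \<or> z \<notin> X y" if "x \<in> G" "y \<in> G" "x \<noteq> y" for x y
    proof -
      have "X x \<inter> X y \<in> null_sets M" using sets null that by (auto intro: null_setsI)
      from AE_not_in[OF this] show ?thesis by eventually_elim auto
    qed
    then show "pairwise (\<lambda>x y. AE z in M. z \<notin> X x \<or> z \<notin> X y) G"
      unfolding pairwise_def by blast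
  qed fact
  also have "\<dots> \<le> measure M (space M)" by (rule bounded_measure)
  finally show ?thesis .
qed

lemma (in finite_measure) countable_almost_disjoint_family:
  assumes sets: "\<And>x. x \<in> F \<Longrightarrow> X x \<in> sets M"
    and pos: "\<And>x. x \<in> F \<Longrightarrow> 0 < emeasure M (X x)"
    and null: "\<And>x y. x \<in> F \<Longrightarrow> y \<in> F \<Longrightarrow> x \<noteq> y \<Longrightarrow> emeasure M (X x \<inter> X y) = 0"
  shows "countable F"
proof -
  define F_m where "F_m m = {x\<in>F. inverse (Suc m) \<le> measure M (X x)}" for m :: nat
  have "finite (F_m m)" for m
  proof -
    have "card G \<le> nat \<lceil>measure M (space M) * Suc m\<rceil>" if "G \<subseteq> F_m m" "finite G" for G
    proof -
      have "card G * inverse (Suc m) \<le> measure M (space M)"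
        using that sets null by (intro card_almost_disjoint_le[where X = X]) (auto simp: F_m_def subset_iff)
      then show ?thesis by (simp add: field_simps) linarith
    qed
    then show ?thesis by (metis finite_if_finite_subsets_card_bdd)
  qed
  moreover have "F = (\<Union>m. F_m m)"
  proof (intro equalityI subsetI)
    fix x assume x: "x \<in> F"
    then have "0 < measure M (X x)" using pos by (simp add: emeasure_eq_measure)
    then obtain m where "inverse (Suc m) < measure M (X x)"
      using reals_Archimedean by blast
    then have "x \<in> F_m m" using x by (simp add: F_m_def less_imp_le)
    then show "x \<in> (\<Union>m. F_m m)" by blast
  qed (auto simp: F_m_def)
  ultimately show ?thesis by (simp add: countable_finite)
qed

definition maximal_kernel_subspaces :: "('k::field^'n::finite^'n) measure \<Rightarrow> ('k^'n) set set" where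
  "maximal_kernel_subspaces M = {V. vec.subspace V \<and> 0 < emeasure M (annihilator V) \<and>
     (\<forall>V'. vec.subspace V' \<and> V \<subset> V' \<longrightarrow> emeasure M (annihilator V') = 0)}"

lemma annihilator_span: "annihilator (vec.span V) = annihilator V"
proof
  show "annihilator (vec.span V) \<subseteq> annihilator V"
    unfolding annihilator_def using vec.span_superset by blast
  show "annihilator V \<subseteq> annihilator (vec.span V)"
  proof
    fix h assume "h \<in> annihilator V"
    then have "vec.span V \<subseteq> {x. h *v x = 0}"
      by (intro vec.span_minimal vec.subspace_kernel) (auto simp: annihilator_def)
    then show "h \<in> annihilator (vec.span V)" by (auto simp: annihilator_def)
  qed
qed

lemma annihilator_Un: "annihilator (V \<union> W) = annihilator V \<inter> annihilator W"
  by (auto simp: annihilator_def)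

lemma countable_maximal_kernel_subspaces:
  assumes "finite_measure M" and sets: "\<And>V. annihilator V \<in> sets M"
  shows "countable (maximal_kernel_subspaces M)"
proof (rule finite_measure.countable_almost_disjoint_family[OF assms(1), of _ annihilator])
  fix V V' assume V: "V \<in> maximal_kernel_subspaces M" and V': "V' \<in> maximal_kernel_subspaces M"
    and "V \<noteq> V'"
  then have "\<not> V' \<subseteq> V" by (auto simp: maximal_kernel_subspaces_def)
  then have "V \<subset> vec.span (V \<union> V')"
    using vec.span_superset[of "V \<union> V'"] by auto
  with V have "emeasure M (annihilator (vec.span (V \<union> V'))) = 0"
    by (auto simp: maximal_kernel_subspaces_def)
  then show "emeasure M (annihilator V \<inter> annihilator V') = 0"
    by (simp add: annihilator_span annihilator_Un)
qed (auto simp: sets maximal_kernel_subspaces_def)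

lemma exists_maximal_kernel_subspace:
  fixes M :: "('k::field^'n::finite^'n) measure"
  assumes "vec.subspace V\<^sub>0" and "0 < emeasure M (annihilator V\<^sub>0)"
  obtains V where "V \<in> maximal_kernel_subspaces M" and "V\<^sub>0 \<subseteq> V"
proof -
  define P where "P V \<longleftrightarrow> vec.subspace V \<and> V\<^sub>0 \<subseteq> V \<and> 0 < emeasure M (annihilator V)"
    for V :: "('k^'n) set"
  have "P V\<^sub>0" using assms by (simp add: P_def)
  moreover have "P V \<Longrightarrow> vec.dim V < Suc CARD('n)" for V
    using dim_subset_UNIV_cart_gen[of V] by simp
  ultimately obtain V where V: "P V" and V_max: "\<And>V'. P V' \<Longrightarrow> vec.dim V' \<le> vec.dim V"
    using ex_has_greatest_nat[of P _ vec.dim] by metis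
  have "V \<in> maximal_kernel_subspaces M"
    unfolding maximal_kernel_subspaces_def
  proof (intro CollectI conjI allI impI)
    show "vec.subspace V" "0 < emeasure M (annihilator V)" using V by (auto simp: P_def)
    fix V' assume V': "vec.subspace V' \<and> V \<subset> V'"
    moreover have "vec.span V = V" "vec.span V' = V'"
      using V V' by (auto simp: P_def vec.span_eq_iff)
    ultimately have "vec.dim V < vec.dim V'"
      using vec.dim_psubset[of V V'] by (simp only:)
    then have "\<not> P V'" using V_max by (meson not_le)
    then show "emeasure M (annihilator V') = 0"
      using V V' by (auto simp: P_def)
  qed
  with V show thesis by (intro that) (auto simp: P_def)
qed

lemma Union_maximal_kernel_subspaces:
  fixes M :: "('k::field^'n::finite^'n) measure"
  assumes sets: "\<And>v. annihilator {v} \<in> sets M"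
  shows "\<Union>(maximal_kernel_subspaces M) = {v. 0 < emeasure M (annihilator {v})}"
proof (intro equalityI subsetI)
  fix v assume "v \<in> \<Union>(maximal_kernel_subspaces M)"
  then obtain V where V: "V \<in> maximal_kernel_subspaces M" "v \<in> V" by blast
  then have "annihilator V \<subseteq> annihilator {v}" by (auto simp: annihilator_def)
  then have "emeasure M (annihilator V) \<le> emeasure M (annihilator {v})"
    using sets by (rule emeasure_mono)
  with V show "v \<in> {v. 0 < emeasure M (annihilator {v})}"
    by (auto simp: maximal_kernel_subspaces_def)
next
  fix v assume "v \<in> {v. 0 < emeasure M (annihilator {v})}"
  then obtain V where "V \<in> maximal_kernel_subspaces M" "vec.span {v} \<subseteq> V"
    using exists_maximal_kernel_subspace[of "vec.span {v}" M] by (auto simp: annihilator_span)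
  then show "v \<in> \<Union>(maximal_kernel_subspaces M)" by (auto intro: vec.span_base)
qed

lemma dim_add_le_if_annihilator_positive:
  fixes M :: "('k::field^'n::finite^'n) measure"
  assumes "vec.subspace V" and pos: "0 < emeasure M (annihilator V)"
    and sets: "{g. rank g < r} \<in> sets M" and null: "emeasure M {g. rank g < r} = 0"
  shows "vec.dim V + r \<le> CARD('n)"
proof -
  have "\<not> annihilator V \<subseteq> {g::'k^'n^'n. rank g < r}"
  proof
    assume "annihilator V \<subseteq> {g::'k^'n^'n. rank g < r}"
    from emeasure_mono[OF this sets] have "emeasure M (annihilator V) \<le> 0"
      using null by simp
    with pos show False by simp
  qed
  then obtain h :: "'k^'n^'n" where "h \<in> annihilator V" "\<not> rank h < r" by blast
  then show ?thesis
    using dim_add_rank_le_if_annihilates[OF assms(1), of h] by (auto simp: annihilator_def not_less)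
qed

theorem proposition3p5:
  fixes \<nu> :: "('k::{field,t2_space,second_countable_topology} ^'n::finite^'n) measure"
  assumes "local_field TYPE('k)"
    and "CARD('n) \<ge> 2"
    and "prob_space \<nu>"
    and "sets \<nu> = sets borel"
  shows "\<exists>\<W> :: ('k^'n) set set. countable \<W> \<and>
           (\<forall>W\<in>\<W>. vec.subspace W \<and> vec.dim W \<le> CARD('n) - lower_rank \<nu>) \<and>
           lower_ker \<nu> = \<Union>\<W>"
proof -
  interpret continuous_field_ops "TYPE('k)"
    using assms(1) by (rule continuous_field_ops_if_local_field)
  have closed_sets: "closed S \<Longrightarrow> S \<in> sets (mat_conv_pow \<nu> n)" for S n
    by simp
  let ?\<W> = "\<Union>n. maximal_kernel_subspaces (mat_conv_pow \<nu> n)"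
  have "countable ?\<W>"
    using countable_maximal_kernel_subspaces finite_measure_mat_conv_pow[OF assms(3)]
      closed_sets[OF closed_annihilator] by blast
  moreover have "vec.subspace W \<and> vec.dim W \<le> CARD('n) - lower_rank \<nu>" if "W \<in> ?\<W>" for W
    using that dim_add_le_if_annihilator_positive[OF _ _ closed_sets[OF closed_rank_less] lower_rank_null]
    by (fastforce simp: maximal_kernel_subspaces_def)
  moreover have "lower_ker \<nu> = \<Union>?\<W>"
  proof -
    have "lower_ker \<nu> = (\<Union>n. {v. 0 < emeasure (mat_conv_pow \<nu> n) (annihilator {v})})"
      by (auto simp: lower_ker_def annihilator_def)
    also have "\<dots> = (\<Union>n. \<Union>(maximal_kernel_subspaces (mat_conv_pow \<nu> n)))"
      using Union_maximal_kernel_subspaces[OF closed_sets[OF closed_annihilator]] by simp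
    finally show ?thesis by blast
  qed
  ultimately show ?thesis by blast
qed

end
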